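(* For $\alpha\in\Sigma_0^+$ put $x_\alpha=\tfrac14(m_{\alpha/2}+2)$ and $y_\alpha=\tfrac14(m_{\alpha/2}+2m_\alpha)$. Let $\mu\in\Lambda^+$. Then $\mu_\alpha\in\mathbb Z_{\geq0}$ for all $\alpha\in\Sigma_0^+$, and \[ \mathbf c(\mu+\rho)=\prod_{\alpha\in\Sigma_0^+}\left(\Big(1+\frac{x_\alpha}{\rho_\alpha}\Big)\Big(1+\frac{y_\alpha}{\rho_\alpha}\Big)\right)^{-\mu_\alpha}\cdot\prod_{j=0}^{\mu_\alpha-1}\frac{\big(1+\frac{j}{2\rho_\alpha}\big)\big(1+\frac{\mu_\alpha+j}{2\rho_\alpha}\big)}{\big(1+\frac{j}{x_\alpha+\rho_\alpha}\big)\big(1+\frac{j}{y_\alpha+\rho_\alpha}\big)}, \] where the inner product over $j$ is interpreted as $1$ when $\mu_\alpha=0$.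
   Context: Standing setup. $G$ is a connected compact semisimple Lie group with Lie algebra $\mathfrak g$, $\theta$ an involutive automorphism, $K$ a closed subgroup with $(G^\theta)_0\subseteq K\subseteq G^\theta$, $M=G/K$ simply connected. $\mathfrak g=\mathfrak k\oplus\mathfrak s$ is the eigenspace decomposition of $\theta$, $\mathfrak a\subseteq\mathfrak s$ is maximal abelian, and a $K$-invariant inner product on $\mathfrak s$ induces a real inner product $\langle\cdot,\cdot\rangle$ on $i\mathfrak a^*$. $\Sigma\subset i\mathfrak a^*$ is the set of restricted roots of $(\mathfrak g_{\mathbb C},\mathfrak a_{\mathbb C})$, $m_\alpha=\dim_{\mathbb C}\mathfrak g_{\mathbb C,\alpha}$ the multiplicity (with $m_\beta=0$ if $\beta\notin\Sigma$), $\Sigma^+$ a positive system, $\Sigma_0^+=\{\alpha\in\Sigma^+:2\alpha\notin\Sigma\}$, and $\rho=\tfrac12\sum_{\alpha\in\Sigma^+}m_\alpha\alpha$. For $\lambda\in\mathfrak a_{\mathbb C}^*$ and $\alpha\in\Sigma$, $\lambda_\alpha=\langle\lambda,\alpha\rangle/\langle\alpha,\alpha\rangle$ (so $\rho_\alpha=\langle\rho,\alpha\rangle/\langle\alpha,\alpha\rangle>0$ for $\alpha\in\Sigma^+$). $\Lambda^+=\{\mu\in i\mathfrak a^*:\mu_\alpha\in\mathbb Z_{\ge0}\ \forall\alpha\in\Sigma^+\}$. The Harish-Chandra $c$-function is $\mathbf c(\lambda)={}'c(\lambda)/{}'c(\rho)$ with \[ {}'c(\lambda)=\prod_{\alpha\in\Sigma_0^+}\frac{2^{-2\lambda_\alpha}\,\Gamma(2\lambda_\alpha)}{\Gamma\big(\lambda_\alpha+\tfrac{m_{\alpha/2}}{4}+\tfrac12\big)\,\Gamma\big(\lambda_\alpha+\tfrac{m_{\alpha/2}}{4}+\tfrac{m_\alpha}{2}\big)}.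 \] *)

theory Defs
  imports "HOL-Analysis.Analysis"
begin

text \<open>The real Euclidean space i a^* is modelled by a type 'a :: euclidean_space,
  with the inner product written as a dot.\<close>

definition coef :: "'a::euclidean_space \<Rightarrow> 'a \<Rightarrow> real" where
  "coef l \<alpha> = (l \<bullet> \<alpha>) / (\<alpha> \<bullet> \<alpha>)"

definition refl :: "'a::euclidean_space \<Rightarrow> 'a \<Rightarrow> 'a" where
  "refl \<alpha> \<beta> = \<beta> - (2 * coef \<beta> \<alpha>) *\<^sub>R \<alpha>"

definition root_system :: "'a::euclidean_space set \<Rightarrow> bool" where
  "root_system S \<longleftrightarrow> finite S \<and> 0 \<notin> S \<and> span S = UNIV \<and>
     (\<forall>\<alpha>\<in>S. \<forall>\<beta>\<in>S. refl \<alpha> \<beta> \<in> S \<and> 2 * coef \<beta> \<alpha> \<in> \<int>)"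

definition multiplicity :: "'a::euclidean_space set \<Rightarrow> ('a \<Rightarrow> nat) \<Rightarrow> bool" where
  "multiplicity S m \<longleftrightarrow> (\<forall>\<beta>. \<beta> \<notin> S \<longrightarrow> m \<beta> = 0) \<and> (\<forall>\<alpha>\<in>S. m \<alpha> > 0) \<and>
     (\<forall>\<alpha>\<in>S. \<forall>\<beta>\<in>S. m (refl \<alpha> \<beta>) = m \<beta>)"

definition positive_system :: "'a::euclidean_space set \<Rightarrow> 'a set \<Rightarrow> bool" where
  "positive_system S Sp \<longleftrightarrow> (\<exists>H. (\<forall>\<alpha>\<in>S. \<alpha> \<bullet> H \<noteq> 0) \<and> Sp = {\<alpha>\<in>S. \<alpha> \<bullet> H > 0})"

definition Sigma0 :: "'a::euclidean_space set \<Rightarrow> 'a set \<Rightarrow> 'a set" where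
  "Sigma0 S Sp = {\<alpha>\<in>Sp. 2 *\<^sub>R \<alpha> \<notin> S}"

definition rho :: "'a::euclidean_space set \<Rightarrow> ('a \<Rightarrow> nat) \<Rightarrow> 'a" where
  "rho Sp m = (1/2) *\<^sub>R (\<Sum>\<alpha>\<in>Sp. real (m \<alpha>) *\<^sub>R \<alpha>)"

definition Lambda_plus :: "'a::euclidean_space set \<Rightarrow> 'a set" where
  "Lambda_plus Sp = {\<mu>. \<forall>\<alpha>\<in>Sp. \<exists>n::nat. coef \<mu> \<alpha> = real n}"

text \<open>The function c' (evaluated at real points of i a^*).\<close>
definition cprime :: "'a::euclidean_space set \<Rightarrow> 'a set \<Rightarrow> ('a \<Rightarrow> nat) \<Rightarrow> 'a \<Rightarrow> real" where
  "cprime S Sp m l = (\<Prod>\<alpha>\<in>Sigma0 S Sp.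
      (2 powr (- 2 * coef l \<alpha>) * Gamma (2 * coef l \<alpha>)) /
      (Gamma (coef l \<alpha> + real (m ((1/2) *\<^sub>R \<alpha>)) / 4 + 1/2) *
       Gamma (coef l \<alpha> + real (m ((1/2) *\<^sub>R \<alpha>)) / 4 + real (m \<alpha>) / 2)))"

definition c_fun :: "'a::euclidean_space set \<Rightarrow> 'a set \<Rightarrow> ('a \<Rightarrow> nat) \<Rightarrow> 'a \<Rightarrow> real" where
  "c_fun S Sp m l = cprime S Sp m l / cprime S Sp m (rho Sp m)"

end

theory Submission
  imports Defs
begin

text \<open>
  The function c' is a product over the roots in Sigma0 of a rank-one factor
  F_{x,y}(l) = 2^{-2l} Gamma(2l) / (Gamma(l+x) Gamma(l+y)), evaluated at l = coef lambda alpha with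
  x = (m_{alpha/2}+2)/4 and y = (m_{alpha/2}+2 m_alpha)/4.  Since coef is linear in its first
  argument, c(mu + rho) is the product over alpha of F(k + r) / F(r) with k = coef mu alpha and
  r = coef rho alpha.  For k a natural number and r > 0 the functional equation of Gamma turns
  this ratio into Pochhammer symbols, 4^{-k} (2r)_{2k} / ((r+x)_k (r+y)_k), and splitting
  (2r)_{2k} = (2r)_k (2r+k)_k yields a finite product of k factors, which is regrouped into
  the normalised form of the theorem.
\<close>

definition c_factor :: "real \<Rightarrow> real \<Rightarrow> real \<Rightarrow> real" where
  "c_factor x y l = 2 powr (- 2 * l) * Gamma (2 * l) / (Gamma (l + x) * Gamma (l + y))"

lemma Gamma_add_nat:
  fixes z :: real
  assumes "z > 0"
  shows "Gamma (z + real n) = pochhammer z n * Gamma z"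
proof -
  have z_ok: "z \<notin> \<int>\<^sub>\<le>\<^sub>0" using assms by (auto elim!: nonpos_Ints_cases)
  have "Gamma z \<noteq> 0" using Gamma_real_pos[OF assms] by linarith
  with pochhammer_Gamma[OF z_ok, of n] show ?thesis by simp
qed

lemma pochhammer_double_length:
  fixes z :: real
  shows "pochhammer z (2 * k) = (\<Prod>j<k. (z + real j) * (z + real k + real j))"
proof -
  have "pochhammer z (2 * k) = pochhammer z k * pochhammer (z + real k) k"
    using pochhammer_product'[of z k k] by (simp add: mult_2)
  also have "\<dots> = (\<Prod>j<k. z + real j) * (\<Prod>j<k. z + real k + real j)"
    by (simp only: pochhammer_prod atLeast0LessThan)
  finally show ?thesis by (simp only: prod.distrib)
qed

lemma two_powr_shift:
  "(2::real) powr (- 2 * (real k + r)) = (1/4) ^ k * 2 powr (- 2 * r)"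
proof -
  have "(2::real) powr (2 * real k) = 4 ^ k"
    using powr_realpow[of 2 "2 * k"] by (simp add: power_mult)
  hence "(2::real) powr (- 2 * real k) = (1/4) ^ k"
    by (simp add: powr_minus power_one_over inverse_eq_divide)
  moreover have "(2::real) powr (- 2 * (real k + r)) = 2 powr (- 2 * real k) * 2 powr (- 2 * r)"
    by (simp add: algebra_simps flip: powr_add)
  ultimately show ?thesis by simp
qed

lemma c_factor_shift_pochhammer:
  fixes x y r :: real
  assumes r: "r > 0" and rx: "r + x > 0" and ry: "r + y > 0"
  shows "c_factor x y (real k + r) / c_factor x y r
    = (1/4) ^ k * pochhammer (2 * r) (2 * k) / (pochhammer (r + x) k * pochhammer (r + y) k)"
proof -
  have "Gamma (2 * (real k + r)) = pochhammer (2 * r) (2 * k) * Gamma (2 * r)"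
    using Gamma_add_nat[of "2 * r" "2 * k"] r by (simp add: algebra_simps)
  moreover have "Gamma (real k + r + x) = pochhammer (r + x) k * Gamma (r + x)"
    using Gamma_add_nat[OF rx, of k] by (simp add: algebra_simps)
  moreover have "Gamma (real k + r + y) = pochhammer (r + y) k * Gamma (r + y)"
    using Gamma_add_nat[OF ry, of k] by (simp add: algebra_simps)
  moreover have "Gamma (2 * r) > 0" "Gamma (r + x) > 0" "Gamma (r + y) > 0"
    using r rx ry by (auto intro!: Gamma_real_pos)
  moreover have "pochhammer (r + x) k > 0" "pochhammer (r + y) k > 0"
    using rx ry by (auto intro!: pochhammer_pos)
  moreover have "(2::real) powr (- 2 * r) > 0" by simp
  ultimately show ?thesis
    unfolding c_factor_def two_powr_shift by (simp add: field_simps)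
qed

lemma normalised_factor:
  fixes x y r j k :: real
  assumes r: "r > 0" and rx: "r + x > 0" and ry: "r + y > 0" and j: "j \<ge> 0"
  shows "(1 / ((1 + x / r) * (1 + y / r))) *
      (((1 + j / (2 * r)) * (1 + (k + j) / (2 * r))) / ((1 + j / (x + r)) * (1 + j / (y + r))))
    = (1/4) * ((2 * r + j) * (2 * r + k + j)) / ((r + x + j) * (r + y + j))"
proof -
  have nz: "r \<noteq> 0" "r + x \<noteq> 0" "r + y \<noteq> 0" "r + x + j \<noteq> 0" "r + y + j \<noteq> 0"
    using r rx ry j by linarith+
  have eqs: "1 + x / r = (r + x) / r" "1 + y / r = (r + y) / r"
    "1 + j / (x + r) = (r + x + j) / (r + x)" "1 + j / (y + r) = (r + y + j) / (r + y)"
    "1 + j / (2 * r) = (2 * r + j) / (2 * r)" "1 + (k + j) / (2 * r) = (2 * r + k + j) / (2 * r)"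
    using nz by (simp_all add: field_simps)
  have "1 / ((A / r) * (B / r)) * ((C / (2 * r)) * (D / (2 * r)) / ((P / A) * (Q / B)))
      = (1/4) * (C * D) / (P * Q)"
    if "A \<noteq> 0" "B \<noteq> 0" "P \<noteq> 0" "Q \<noteq> 0" for A B C D P Q :: real
    using that nz(1) by (simp add: field_simps)
  then show ?thesis unfolding eqs using nz by (simp add: add.assoc)
qed

lemma c_factor_shift_ratio_nat:
  fixes x y r :: real and k :: nat
  assumes r: "r > 0" and rx: "r + x > 0" and ry: "r + y > 0"
  shows "c_factor x y (real k + r) / c_factor x y r =
    ((1 + x / r) * (1 + y / r)) powr (- real k) *
      (\<Prod>j<k. ((1 + real j / (2 * r)) * (1 + (real k + real j) / (2 * r))) /
              ((1 + real j / (x + r)) * (1 + real j / (y + r))))"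
proof -
  have "1 + x / r > 0" "1 + y / r > 0"
    using r rx ry by (simp_all add: field_simps)
  hence base: "(1 + x / r) * (1 + y / r) > 0" by simp
  have "((1 + x / r) * (1 + y / r)) powr (- real k) *
      (\<Prod>j<k. ((1 + real j / (2 * r)) * (1 + (real k + real j) / (2 * r))) /
              ((1 + real j / (x + r)) * (1 + real j / (y + r))))
    = (\<Prod>j<k. (1 / ((1 + x / r) * (1 + y / r))) *
        (((1 + real j / (2 * r)) * (1 + (real k + real j) / (2 * r))) /
         ((1 + real j / (x + r)) * (1 + real j / (y + r)))))"
  proof -
    have "((1 + x / r) * (1 + y / r)) powr (- real k) = (1 / ((1 + x / r) * (1 + y / r))) ^ k"
      using base by (simp add: powr_minus powr_realpow inverse_eq_divide power_one_over)
    then show ?thesis by (simp only: prod.distrib prod_constant card_lessThan)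
  qed
  also have "\<dots> = (\<Prod>j<k. (1/4) * ((2 * r + real j) * (2 * r + real k + real j))
                             / ((r + x + real j) * (r + y + real j)))"
    by (rule prod.cong[OF refl], rule normalised_factor[OF r rx ry]) simp
  also have "\<dots> = (1/4) ^ k * pochhammer (2 * r) (2 * k)
                    / (pochhammer (r + x) k * pochhammer (r + y) k)"
    unfolding pochhammer_double_length
    by (simp add: pochhammer_prod atLeast0LessThan prod.distrib prod_dividef power_one_over add.assoc)
  finally show ?thesis by (simp add: c_factor_shift_pochhammer[OF r rx ry])
qed

lemma c_factor_shift_ratio:
  fixes x y r k :: real
  assumes "r > 0" and "r + x > 0" and "r + y > 0" and "\<exists>n::nat. k = real n"
  shows "c_factor x y (k + r) / c_factor x y r =
    ((1 + x / r) * (1 + y / r)) powr (- k) *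
      (\<Prod>j<nat \<lfloor>k\<rfloor>. ((1 + real j / (2 * r)) * (1 + (k + real j) / (2 * r))) /
              ((1 + real j / (x + r)) * (1 + real j / (y + r))))"
  using assms c_factor_shift_ratio_nat by auto

lemma coef_add: "coef (u + v) a = coef u a + coef v a"
  by (simp add: coef_def inner_add_left add_divide_distrib)

lemma cprime_as_c_factor_prod:
  "cprime S Sp m l = (\<Prod>\<alpha>\<in>Sigma0 S Sp.
     c_factor ((real (m ((1/2) *\<^sub>R \<alpha>)) + 2) / 4)
              ((real (m ((1/2) *\<^sub>R \<alpha>)) + 2 * real (m \<alpha>)) / 4) (coef l \<alpha>))"
proof -
  have shift: "\<And>a b c :: real. c + a / 4 + b / 2 = c + (a + 2 * b) / 4"
    by (simp add: field_simps)
  show ?thesis unfolding cprime_def c_factor_def shift by simp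
qed

theorem theorem3p5:
  fixes S Sp :: "'a::euclidean_space set" and m :: "'a \<Rightarrow> nat" and \<mu> :: 'a
  assumes "root_system S" and "multiplicity S m" and "positive_system S Sp"
    and rho_pos: "\<forall>\<alpha>\<in>Sp. coef (rho Sp m) \<alpha> > 0"
    and "\<mu> \<in> Lambda_plus Sp"
  shows "(\<forall>\<alpha>\<in>Sigma0 S Sp. \<exists>n::nat. coef \<mu> \<alpha> = real n) \<and>
    c_fun S Sp m (\<mu> + rho Sp m) =
      (\<Prod>\<alpha>\<in>Sigma0 S Sp.
        let x = (real (m ((1/2) *\<^sub>R \<alpha>)) + 2) / 4;
            y = (real (m ((1/2) *\<^sub>R \<alpha>)) + 2 * real (m \<alpha>)) / 4;
            r = coef (rho Sp m) \<alpha>;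
            k = coef \<mu> \<alpha>
        in ((1 + x / r) * (1 + y / r)) powr (- k) *
           (\<Prod>j<nat \<lfloor>k\<rfloor>.
              ((1 + real j / (2 * r)) * (1 + (k + real j) / (2 * r))) /
              ((1 + real j / (x + r)) * (1 + real j / (y + r)))))"
proof -
  have sub: "Sigma0 S Sp \<subseteq> Sp" by (auto simp: Sigma0_def)
  have integral: "\<forall>\<alpha>\<in>Sigma0 S Sp. \<exists>n::nat. coef \<mu> \<alpha> = real n"
    using assms(5) sub by (auto simp: Lambda_plus_def)
  have ratio: "c_fun S Sp m (\<mu> + rho Sp m) = (\<Prod>\<alpha>\<in>Sigma0 S Sp.
      let x = (real (m ((1/2) *\<^sub>R \<alpha>)) + 2) / 4;
          y = (real (m ((1/2) *\<^sub>R \<alpha>)) + 2 * real (m \<alpha>)) / 4;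
          r = coef (rho Sp m) \<alpha>; k = coef \<mu> \<alpha>
      in c_factor x y (k + r) / c_factor x y r)"
    unfolding c_fun_def cprime_as_c_factor_prod coef_add Let_def by (simp add: prod_dividef)
  have rho_pos0: "\<forall>\<alpha>\<in>Sigma0 S Sp. coef (rho Sp m) \<alpha> > 0" using rho_pos sub by blast
  show ?thesis
    unfolding ratio Let_def
    by (intro conjI integral prod.cong refl c_factor_shift_ratio)
       (use integral rho_pos0 in \<open>auto intro!: add_pos_nonneg\<close>)
qed

end
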